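(* In the Banach space $C^0([0,1])$ of continuous real functions on $[0,1]$ with the supremum norm, the set of functions which are not completely non-Hölder is meagre (i.e. of first Baire category).
   Context: For $\alpha>0$, a function $g:[0,1]\to\mathbb{R}$ is called $\alpha$-Hölder at $x_0$ from the right if $\limsup_{y\searrow x_0}\frac{|g(y)-g(x_0)|}{|y-x_0|^\alpha}<\infty$, and $\alpha$-Hölder at $x_0$ from the left if $\limsup_{y\nearrow x_0}\frac{|g(y)-g(x_0)|}{|y-x_0|^\alpha}<\infty$. The function $g$ is called completely non-Hölder if there is no $x_0\in[0,1]$ and no $\alpha>0$ such that $g$ is $\alpha$-Hölder at $x_0$ from the left or from the right. *)

theory Defs
  imports "HOL-Analysis.Analysis"
begin

definition nowhere_dense_in :: "'a topology \<Rightarrow> 'a set \<Rightarrow> bool" where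
  "nowhere_dense_in X S \<longleftrightarrow> S \<subseteq> topspace X \<and> X interior_of (X closure_of S) = {}"

definition meagre_in :: "'a topology \<Rightarrow> 'a set \<Rightarrow> bool" where
  "meagre_in X S \<longleftrightarrow> S \<subseteq> topspace X \<and>
     (\<exists>\<F>. countable \<F> \<and> (\<forall>T\<in>\<F>. nowhere_dense_in X T) \<and> S \<subseteq> \<Union>\<F>)"

text \<open>The Banach space C^0([0,1]) with the supremum metric: continuous real
  functions on [0,1] (extensional, i.e. undefined outside [0,1]).\<close>
definition C01 :: "(real \<Rightarrow> real) metric" where
  "C01 = cfunspace (top_of_set {0..1}) euclidean_metric"

text \<open>Hoelder continuity from the right / left at a point (the one-sided
  condition only makes sense when points on that side exist in [0,1]).\<close>
definition holder_right :: "(real \<Rightarrow> real) \<Rightarrow> real \<Rightarrow> real \<Rightarrow> bool" where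
  "holder_right g x0 \<alpha> \<longleftrightarrow> x0 < 1 \<and>
     Limsup (at x0 within {x0<..1}) (\<lambda>y. ereal (\<bar>g y - g x0\<bar> / \<bar>y - x0\<bar> powr \<alpha>)) < \<infinity>"

definition holder_left :: "(real \<Rightarrow> real) \<Rightarrow> real \<Rightarrow> real \<Rightarrow> bool" where
  "holder_left g x0 \<alpha> \<longleftrightarrow> 0 < x0 \<and>
     Limsup (at x0 within {0..<x0}) (\<lambda>y. ereal (\<bar>g y - g x0\<bar> / \<bar>y - x0\<bar> powr \<alpha>)) < \<infinity>"

definition completely_non_holder :: "(real \<Rightarrow> real) \<Rightarrow> bool" where
  "completely_non_holder g \<longleftrightarrow>
     \<not> (\<exists>x0\<in>{0..1}. \<exists>\<alpha>>0. holder_left g x0 \<alpha> \<or> holder_right g x0 \<alpha>)"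

end

theory Submission
  imports Defs
begin

text \<open>Let \<open>holder_set n s\<close> consist of the \<open>g\<close> that satisfy
  \<open>|g y - g x\<^sub>0| \<le> n |y - x\<^sub>0|\<^bsup>1/n\<^esup>\<close> for all \<open>y\<close> on side \<open>s \<in> {1, -1}\<close> of some point
  \<open>x\<^sub>0\<close> having room \<open>1/n\<close> on that side. A function that is Hoelder at \<open>x\<^sub>0\<close> from one side
  lies in such a set for large \<open>n\<close>: near \<open>x\<^sub>0\<close> the Hoelder bound applies, away from \<open>x\<^sub>0\<close>
  boundedness of \<open>g\<close> does. Each \<open>holder_set n s\<close> is closed, by compactness of the
  admissible points \<open>x\<^sub>0\<close>, and has empty interior: adding \<open>a sin (N x)\<close> moves \<open>g\<close> by at
  most \<open>a\<close> but, for \<open>N\<close> large, creates an oscillation of size about \<open>a\<close> within distance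
  \<open>2\<pi>/N\<close> on either side of every point, which the bound \<open>n (2\<pi>/N)\<^bsup>1/n\<^esup>\<close> cannot
  accommodate.\<close>

lemma sin_oscillation_right: "\<exists>u\<in>{t..t + 2*pi}. 1 \<le> \<bar>sin u - sin t\<bar>"
proof -
  define c where "c = (if sin t \<ge> 0 then -pi/2 else pi/2)"
  define k where "k = \<lceil>(t - c) / (2*pi)\<rceil>"
  define u where "u = c + 2*pi * of_int k"
  have "(t - c) / (2*pi) \<le> of_int k" "of_int k < (t - c) / (2*pi) + 1"
    unfolding k_def by linarith+
  then have "u \<in> {t..t + 2*pi}"
    unfolding u_def using pi_gt_zero by (simp add: field_simps)
  moreover have "sin u = sin c"
    by (simp add: u_def sin_add)
  ultimately show ?thesis
    by (intro bexI[of _ u]) (auto simp: c_def)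
qed

lemma sin_oscillation_side:
  assumes "0 < N" and "s = 1 \<or> s = -1"
  shows "\<exists>y. 0 \<le> s * (y - x) \<and> \<bar>y - x\<bar> \<le> 2*pi / N \<and> 1 \<le> \<bar>sin (N*y) - sin (N*x)\<bar>"
proof -
  obtain u where u: "s*(N*x) \<le> u" "u \<le> s*(N*x) + 2*pi" "1 \<le> \<bar>sin u - sin (s*(N*x))\<bar>"
    using sin_oscillation_right[of "s*(N*x)"] by auto
  have "s * (s * u / N - x) = (u - s*(N*x)) / N"
    using assms by (auto simp: field_simps)
  moreover have "0 \<le> (u - s*(N*x)) / N" "(u - s*(N*x)) / N \<le> 2*pi / N"
    using u \<open>0 < N\<close> by (auto intro: divide_right_mono)
  moreover have "\<bar>sin (N * (s * u / N)) - sin (N*x)\<bar> = \<bar>sin u - sin (s*(N*x))\<bar>"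
    using assms by auto
  ultimately show ?thesis
    using u assms(2) by (intro exI[of _ "s * u / N"]) (auto simp: abs_if)
qed

lemma powr_inverse_le_of_le_power:
  assumes "0 < r" "0 \<le> D" "D \<le> r ^ n" "n \<ge> 1"
  shows "D powr (1 / real n) \<le> r"
proof -
  have "D powr (1 / real n) \<le> (r powr real n) powr (1 / real n)"
    using assms by (intro powr_mono2) (auto simp: powr_realpow)
  also have "\<dots> = r"
    using assms by (simp add: powr_powr)
  finally show ?thesis .
qed

lemma add_mult_in_unit_interval:
  assumes "x \<in> {0..1}" "x + s * c \<in> {0..1}" "0 \<le> t" "t \<le> c"
  shows "x + s * t \<in> {0..1::real}"
proof (cases "0 \<le> s")
  case True
  then show ?thesis
    using assms mult_left_mono[of t c s] mult_nonneg_nonneg[of s t] by auto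
next
  case False
  then have "s * c \<le> s * t" "s * t \<le> 0"
    using assms mult_left_mono_neg[of t c s] mult_nonpos_nonneg[of s t] by auto
  then show ?thesis
    using assms by auto
qed

lemma Limsup_less_PInf_imp_bounded_near:
  fixes f :: "'a::metric_space \<Rightarrow> real"
  assumes "Limsup (at x within S) (\<lambda>y. ereal (f y)) < \<infinity>"
  obtains M d where "0 \<le> M" "0 < d" "\<And>y. y \<in> S \<Longrightarrow> y \<noteq> x \<Longrightarrow> dist y x < d \<Longrightarrow> f y \<le> M"
proof -
  obtain m :: nat where "Limsup (at x within S) (\<lambda>y. ereal (f y)) < ereal (real m)"
    using assms less_PInf_Ex_of_nat by auto
  then have "eventually (\<lambda>y. ereal (f y) < ereal (real m)) (at x within S)"
    by (rule Limsup_lessD)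
  then obtain d where "0 < d" "\<And>y. y \<in> S \<Longrightarrow> y \<noteq> x \<Longrightarrow> dist y x < d \<Longrightarrow> f y < real m"
    unfolding eventually_at by auto
  then show ?thesis
    by (intro that[of "real m" d]) (auto intro: less_imp_le)
qed

lemma nowhere_dense_in_mtopology_of:
  assumes "closedin (mtopology_of m) S"
    and "\<And>g e. \<lbrakk>g \<in> S; 0 < e\<rbrakk> \<Longrightarrow> \<exists>h\<in>mspace m. mdist m g h < e \<and> h \<notin> S"
  shows "nowhere_dense_in (mtopology_of m) S"
  unfolding nowhere_dense_in_def
proof
  interpret Metric_space "mspace m" "mdist m"
    by (rule Metric_space_mspace_mdist)
  show "S \<subseteq> topspace (mtopology_of m)"
    using closedin_subset[OF assms(1)] .
  have "g \<notin> mtopology_of m interior_of S" for g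
  proof
    assume "g \<in> mtopology_of m interior_of S"
    then obtain T where T: "openin mtopology T" "g \<in> T" "T \<subseteq> S"
      unfolding interior_of_def mtopology_of_def by blast
    then obtain e where "0 < e" "mball g e \<subseteq> T"
      unfolding openin_mtopology by blast
    moreover obtain h where "h \<in> mspace m" "mdist m g h < e" "h \<notin> S"
      using assms(2) T \<open>0 < e\<close> by blast
    moreover have "g \<in> mspace m"
      using T closedin_subset[OF assms(1)] by auto
    ultimately show False
      using T by (metis in_mball subsetD)
  qed
  then show "mtopology_of m interior_of (mtopology_of m closure_of S) = {}"
    using closure_of_closedin[OF assms(1)] by auto
qed

lemma mspace_C01: "mspace C01 = {f. f \<in> extensional {0..1} \<and> continuous_on {0..1} f}"
  unfolding C01_def
  by (subst compactin_mspace_cfunspace) (auto simp: compactin_subtopology continuous_map_iff_continuous)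

lemma C01_dist_le_mdist:
  "\<lbrakk>f \<in> mspace C01; g \<in> mspace C01; x \<in> {0..1}\<rbrakk> \<Longrightarrow> \<bar>f x - g x\<bar> \<le> mdist C01 f g"
  unfolding C01_def
  using mdist_cfunspace_imp_mdist_le[of f "top_of_set {0..1}" euclidean_metric g _ x]
  by (simp add: dist_real_def)

lemma C01_mdist_le:
  "\<lbrakk>0 \<le> B; \<And>x. x \<in> {0..1} \<Longrightarrow> \<bar>f x - g x\<bar> \<le> B\<rbrakk> \<Longrightarrow> mdist C01 f g \<le> B"
  unfolding C01_def by (rule mdist_cfunspace_le) (auto simp: dist_real_def)

lemma C01_bounded:
  assumes "g \<in> mspace C01"
  obtains B where "\<And>x. x \<in> {0..1} \<Longrightarrow> \<bar>g x\<bar> \<le> B"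
proof -
  have "continuous_on {0..1} g"
    using assms by (simp add: mspace_C01)
  then have "bounded (g ` {0..1})"
    by (intro compact_imp_bounded compact_continuous_image) auto
  then show ?thesis
    using that unfolding bounded_real by blast
qed

lemma C01_perturb:
  assumes "g \<in> mspace C01" "continuous_on {0..1} p" "0 \<le> a" "\<And>x. x \<in> {0..1} \<Longrightarrow> \<bar>p x\<bar> \<le> a"
  shows "restrict (\<lambda>x. g x + p x) {0..1} \<in> mspace C01"
    and "mdist C01 g (restrict (\<lambda>x. g x + p x) {0..1}) \<le> a"
proof -
  have "continuous_on {0..1} g"
    using assms(1) by (simp add: mspace_C01)
  then have "continuous_on {0..1} (\<lambda>x. g x + p x)"
    using assms(2) by (rule continuous_on_add)
  then have "continuous_on {0..1} (restrict (\<lambda>x. g x + p x) {0..1})"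
    by (rule continuous_on_eq) simp
  then show "restrict (\<lambda>x. g x + p x) {0..1} \<in> mspace C01"
    by (simp add: mspace_C01)
  show "mdist C01 g (restrict (\<lambda>x. g x + p x) {0..1}) \<le> a"
    using assms by (intro C01_mdist_le) auto
qed

lemma C01_limit_at_convergent_points:
  assumes "limitin (mtopology_of C01) \<sigma> l sequentially"
    and "\<And>k. x k \<in> {0..1}" "x \<longlonglongrightarrow> z" "z \<in> {0..1}"
  shows "(\<lambda>k. \<sigma> k (x k)) \<longlonglongrightarrow> l z"
proof -
  interpret Metric_space "mspace C01" "mdist C01"
    by (rule Metric_space_mspace_mdist)
  have l: "l \<in> mspace C01" and ev: "eventually (\<lambda>k. \<sigma> k \<in> mspace C01) sequentially"
    and null: "(\<lambda>k. mdist C01 (\<sigma> k) l) \<longlonglongrightarrow> 0"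
    using assms(1) by (simp_all add: mtopology_of_def limitin_metric_dist_null)
  from ev have "eventually (\<lambda>k. norm (\<sigma> k (x k) - l (x k)) \<le> mdist C01 (\<sigma> k) l) sequentially"
    by eventually_elim (unfold real_norm_def, rule C01_dist_le_mdist[OF _ l assms(2)])
  then have "(\<lambda>k. \<sigma> k (x k) - l (x k)) \<longlonglongrightarrow> 0"
    using null by (rule Lim_null_comparison)
  moreover have "(\<lambda>k. l (x k)) \<longlonglongrightarrow> l z"
    using l assms(2-4) by (intro continuous_on_tendsto_compose[of "{0..1}" l]) (auto simp: mspace_C01)
  ultimately have "(\<lambda>k. (\<sigma> k (x k) - l (x k)) + l (x k)) \<longlonglongrightarrow> 0 + l z"
    by (rule tendsto_add)
  then show ?thesis
    by simp
qed

text \<open>Without the room condition \<open>x\<^sub>0 + s/n \<in> [0,1]\<close> every function would satisfy the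
  bound vacuously at \<open>x\<^sub>0 = 1\<close> for \<open>s = 1\<close>.\<close>
definition holder_set :: "nat \<Rightarrow> real \<Rightarrow> (real \<Rightarrow> real) set" where
  "holder_set n s = {g \<in> mspace C01. \<exists>x0\<in>{0..1}. x0 + s / real n \<in> {0..1} \<and>
      (\<forall>y\<in>{0..1}. 0 \<le> s * (y - x0) \<longrightarrow> \<bar>g y - g x0\<bar> \<le> real n * \<bar>y - x0\<bar> powr (1 / real n))}"

lemma local_global_bound_le_mult_powr:
  fixes t v :: real
  assumes "0 < t" "t \<le> 1" "0 < d" "1 \<le> real n" "1 / real n \<le> \<alpha>" "0 \<le> M" "M \<le> real n"
    and "2*B \<le> real n * d" and local: "t < d \<Longrightarrow> v \<le> M * t powr \<alpha>" and global: "v \<le> 2*B"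
  shows "v \<le> real n * t powr (1 / real n)"
proof (cases "t < d")
  case True
  have "t powr \<alpha> \<le> t powr (1 / real n)"
    using assms(1,2,5) by (intro powr_mono') auto
  then have "M * t powr \<alpha> \<le> real n * t powr (1 / real n)"
    using assms(6,7) by (intro mult_mono) auto
  with local True show ?thesis
    by linarith
next
  case False
  have "t \<le> t powr (1 / real n)"
    using powr_mono'[of "1 / real n" 1 t] assms(1,2,4) by simp
  then have "real n * d \<le> real n * t powr (1 / real n)"
    using False assms(4) by (intro mult_left_mono) auto
  with global assms(8) show ?thesis
    by linarith
qed

lemma local_holder_bound_imp_holder_set:
  assumes g: "g \<in> mspace C01" and x0: "x0 \<in> {0..1}" and "0 < \<alpha>" and "s \<noteq> 0"
    and "0 < c" "x0 + s * c \<in> {0..1}" and "0 \<le> M" "0 < d"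
    and local: "\<And>y. \<lbrakk>y \<in> {0..1}; 0 < s * (y - x0); \<bar>y - x0\<bar> < d\<rbrakk>
                 \<Longrightarrow> \<bar>g y - g x0\<bar> \<le> M * \<bar>y - x0\<bar> powr \<alpha>"
  shows "\<exists>n\<ge>1. g \<in> holder_set n s"
proof -
  obtain B where B: "\<And>x. x \<in> {0..1} \<Longrightarrow> \<bar>g x\<bar> \<le> B"
    using C01_bounded[OF g] by blast
  obtain n :: nat where "max (max 1 (1/\<alpha>)) (max (1/c) (max M (2*B/d))) \<le> real n"
    using real_arch_simple by blast
  then have n1: "1 \<le> real n" and "M \<le> real n" "1/\<alpha> \<le> real n" "1/c \<le> real n" "2*B/d \<le> real n"
    by auto
  then have "1 / real n \<le> \<alpha>" "1 / real n \<le> c" "2*B \<le> real n * d"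
    using \<open>0 < \<alpha>\<close> \<open>0 < c\<close> \<open>0 < d\<close> by (auto simp: field_simps)
  have "x0 + s / real n \<in> {0..1}"
    using add_mult_in_unit_interval[OF x0 \<open>x0 + s * c \<in> {0..1}\<close>, of "1 / real n"] \<open>1 / real n \<le> c\<close>
    by simp
  moreover have "\<bar>g y - g x0\<bar> \<le> real n * \<bar>y - x0\<bar> powr (1 / real n)"
    if y: "y \<in> {0..1}" and side: "0 \<le> s * (y - x0)" for y
  proof (cases "y = x0")
    case False
    then have "0 < s * (y - x0)"
      using side \<open>s \<noteq> 0\<close> by (simp add: less_le)
    moreover have "\<bar>g y - g x0\<bar> \<le> 2*B"
      using B[OF y] B[OF x0] by linarith
    ultimately show ?thesis
      using False x0 y n1 \<open>0 < d\<close> \<open>0 \<le> M\<close> \<open>M \<le> real n\<close> \<open>1 / real n \<le> \<alpha>\<close> \<open>2*B \<le> real n * d\<close> local[OF y]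
      by (intro local_global_bound_le_mult_powr[of _ d]) auto
  qed simp
  ultimately have "g \<in> holder_set n s"
    unfolding holder_set_def using g x0 by blast
  then show ?thesis
    using n1 by auto
qed

lemma one_sided_holder_imp_holder_set:
  assumes g: "g \<in> mspace C01" and x0: "x0 \<in> {0..1}" and "0 < \<alpha>" and "s \<noteq> 0"
    and "0 < c" "x0 + s * c \<in> {0..1}"
    and "Limsup (at x0 within {y \<in> {0..1}. 0 < s * (y - x0)})
           (\<lambda>y. ereal (\<bar>g y - g x0\<bar> / \<bar>y - x0\<bar> powr \<alpha>)) < \<infinity>"
  shows "\<exists>n\<ge>1. g \<in> holder_set n s"
proof -
  obtain M d where "0 \<le> M" "0 < d" and bound:
      "\<And>y. \<lbrakk>y \<in> {y \<in> {0..1}. 0 < s * (y - x0)}; y \<noteq> x0; dist y x0 < d\<rbrakk>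
        \<Longrightarrow> \<bar>g y - g x0\<bar> / \<bar>y - x0\<bar> powr \<alpha> \<le> M"
    using Limsup_less_PInf_imp_bounded_near[OF assms(7)] by blast
  show ?thesis
  proof (rule local_holder_bound_imp_holder_set[OF assms(1-6) \<open>0 \<le> M\<close> \<open>0 < d\<close>])
    fix y assume "y \<in> {0..1}" "0 < s * (y - x0)" "\<bar>y - x0\<bar> < d"
    moreover from this have "y \<noteq> x0" by auto
    ultimately show "\<bar>g y - g x0\<bar> \<le> M * \<bar>y - x0\<bar> powr \<alpha>"
      using bound[of y] by (simp add: dist_real_def divide_le_eq)
  qed
qed

lemma not_completely_non_holder_imp_holder_set:
  assumes g: "g \<in> mspace C01" and "\<not> completely_non_holder g"
  shows "\<exists>n\<ge>1. \<exists>s\<in>{1, -1}. g \<in> holder_set n s"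
proof -
  obtain x0 \<alpha> where x0: "x0 \<in> {0..1}" and "0 < \<alpha>"
    and "holder_left g x0 \<alpha> \<or> holder_right g x0 \<alpha>"
    using assms(2) unfolding completely_non_holder_def by blast
  moreover have "{y \<in> {0..1}. 0 < -1 * (y - x0)} = {0..<x0}" "{y \<in> {0..1}. 0 < 1 * (y - x0)} = {x0<..1}"
    using x0 by auto
  ultimately consider
      "0 < x0" "Limsup (at x0 within {y \<in> {0..1}. 0 < -1 * (y - x0)})
                  (\<lambda>y. ereal (\<bar>g y - g x0\<bar> / \<bar>y - x0\<bar> powr \<alpha>)) < \<infinity>"
    | "x0 < 1" "Limsup (at x0 within {y \<in> {0..1}. 0 < 1 * (y - x0)})
                  (\<lambda>y. ereal (\<bar>g y - g x0\<bar> / \<bar>y - x0\<bar> powr \<alpha>)) < \<infinity>"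
    unfolding holder_left_def holder_right_def by auto
  then show ?thesis
  proof cases
    case 1
    then show ?thesis
      using one_sided_holder_imp_holder_set[OF g x0 \<open>0 < \<alpha>\<close>, where s="-1" and c=x0] by auto
  next
    case 2
    then show ?thesis
      using one_sided_holder_imp_holder_set[OF g x0 \<open>0 < \<alpha>\<close>, where s=1 and c="1 - x0"] by auto
  qed
qed

lemma one_sided_holder_bound_limit:
  assumes lim: "limitin (mtopology_of C01) \<sigma> l sequentially"
    and xk: "\<And>k. xk k \<in> {0..1}" "xk \<longlonglongrightarrow> x" "x \<in> {0..1}"
    and bound: "\<And>k y. \<lbrakk>y \<in> {0..1}; 0 \<le> s * (y - xk k)\<rbrakk>
                  \<Longrightarrow> \<bar>\<sigma> k y - \<sigma> k (xk k)\<bar> \<le> C * \<bar>y - xk k\<bar> powr \<beta>"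
    and y: "y \<in> {0..1}" "0 \<le> s * (y - x)"
  shows "\<bar>l y - l x\<bar> \<le> C * \<bar>y - x\<bar> powr \<beta>"
proof (cases "y = x")
  case False
  have "eventually (\<lambda>k. 0 \<le> s * (y - xk k)) sequentially"
  proof (cases "s = 0")
    case False
    with y(2) \<open>y \<noteq> x\<close> have "0 < s * (y - x)"
      by (simp add: less_le)
    moreover have "(\<lambda>k. s * (y - xk k)) \<longlonglongrightarrow> s * (y - x)"
      using xk(2) by (intro tendsto_mult tendsto_diff tendsto_const)
    ultimately have "eventually (\<lambda>k. 0 < s * (y - xk k)) sequentially"
      by (simp add: order_tendstoD(1))
    then show ?thesis
      by (rule eventually_mono) simp
  qed simp
  then have "eventually (\<lambda>k. \<bar>\<sigma> k y - \<sigma> k (xk k)\<bar> \<le> C * \<bar>y - xk k\<bar> powr \<beta>) sequentially"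
    by eventually_elim (rule bound[OF y(1)])
  moreover have "(\<lambda>k. \<bar>\<sigma> k y - \<sigma> k (xk k)\<bar>) \<longlonglongrightarrow> \<bar>l y - l x\<bar>"
    using C01_limit_at_convergent_points[OF lim, of "\<lambda>_. y" y] y(1)
          C01_limit_at_convergent_points[OF lim xk]
    by (intro tendsto_rabs tendsto_diff) auto
  moreover have "(\<lambda>k. C * \<bar>y - xk k\<bar> powr \<beta>) \<longlonglongrightarrow> C * \<bar>y - x\<bar> powr \<beta>"
    using xk(2) \<open>y \<noteq> x\<close> by (intro tendsto_mult tendsto_const tendsto_powr tendsto_rabs tendsto_diff) auto
  ultimately show ?thesis
    by (intro tendsto_le[OF trivial_limit_sequentially])
qed simp

lemma holder_set_closed: "closedin (mtopology_of C01) (holder_set n s)"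
proof -
  interpret Metric_space "mspace C01" "mdist C01"
    by (rule Metric_space_mspace_mdist)
  define K where "K = {x \<in> {0..1}. x + s / real n \<in> {0..1}}"
  have "K = {max 0 (- (s / real n)) .. min 1 (1 - s / real n)}"
    unfolding K_def by auto
  then have "compact K" by simp
  have "l \<in> holder_set n s"
    if \<sigma>: "range \<sigma> \<subseteq> holder_set n s" and lim: "limitin mtopology \<sigma> l sequentially"
    for \<sigma> l
  proof -
    have "\<forall>k. \<exists>x\<in>K. \<forall>y\<in>{0..1}. 0 \<le> s * (y - x) \<longrightarrow>
            \<bar>\<sigma> k y - \<sigma> k x\<bar> \<le> real n * \<bar>y - x\<bar> powr (1 / real n)"
      using \<sigma> unfolding holder_set_def K_def by blast
    then obtain xk where xk: "\<And>k. xk k \<in> K"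
      and xk_bound: "\<And>k y. \<lbrakk>y \<in> {0..1}; 0 \<le> s * (y - xk k)\<rbrakk>
                       \<Longrightarrow> \<bar>\<sigma> k y - \<sigma> k (xk k)\<bar> \<le> real n * \<bar>y - xk k\<bar> powr (1 / real n)"
      by metis
    obtain x r where x: "x \<in> K" and r: "strict_mono r" and "(xk \<circ> r) \<longlonglongrightarrow> x"
      using seq_compactE[OF compact_imp_seq_compact[OF \<open>compact K\<close>], of xk] xk by blast
    moreover have "limitin (mtopology_of C01) (\<sigma> \<circ> r) l sequentially"
      using limitin_subsequence[OF r lim] by (simp add: mtopology_of_def)
    moreover have "l \<in> mspace C01"
      using lim by (simp add: limitin_metric_dist_null)
    ultimately show ?thesis
      unfolding holder_set_def using xk xk_bound
      by (auto simp: K_def intro!: bexI[of _ x] one_sided_holder_bound_limit[of "\<sigma> \<circ> r" l "xk \<circ> r"])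
  qed
  moreover have "holder_set n s \<subseteq> mspace C01"
    by (auto simp: holder_set_def)
  ultimately show ?thesis
    unfolding mtopology_of_def metric_closedin_iff_sequentially_closed by blast
qed

lemma oscillating_not_in_holder_set:
  assumes "0 \<le> D" "D \<le> 1 / real n"
    and osc: "\<And>x. \<lbrakk>x \<in> {0..1}; x + s * D \<in> {0..1}\<rbrakk> \<Longrightarrow>
               \<exists>y\<in>{0..1}. 0 \<le> s * (y - x) \<and> \<bar>y - x\<bar> \<le> D \<and>
                 real n * D powr (1 / real n) < \<bar>h y - h x\<bar>"
  shows "h \<notin> holder_set n s"
proof
  assume "h \<in> holder_set n s"
  then obtain x0 where x0: "x0 \<in> {0..1}" and "x0 + s / real n \<in> {0..1}"
    and bound: "\<And>y. \<lbrakk>y \<in> {0..1}; 0 \<le> s * (y - x0)\<rbrakk>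
                  \<Longrightarrow> \<bar>h y - h x0\<bar> \<le> real n * \<bar>y - x0\<bar> powr (1 / real n)"
    unfolding holder_set_def by blast
  then have "x0 + s * (1 / real n) \<in> {0..1}"
    by simp
  then have "x0 + s * D \<in> {0..1}"
    using add_mult_in_unit_interval[OF x0] assms(1,2) by blast
  then obtain y where y: "y \<in> {0..1}" "0 \<le> s * (y - x0)" "\<bar>y - x0\<bar> \<le> D"
    and big: "real n * D powr (1 / real n) < \<bar>h y - h x0\<bar>"
    using osc[OF x0] by blast
  have "real n * \<bar>y - x0\<bar> powr (1 / real n) \<le> real n * D powr (1 / real n)"
    using y by (intro mult_left_mono powr_mono2) auto
  then show False
    using bound[OF y(1,2)] big by linarith
qed

lemma small_scale_mult_powr_le:
  assumes "n \<ge> 1" "0 < b" "0 < \<delta>"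
  obtains D where "0 < D" "D \<le> 1 / real n" "D < \<delta>" "real n * D powr (1 / real n) \<le> b"
proof -
  define r where "r = b / real n"
  have "0 < r"
    using assms by (simp add: r_def)
  define D where "D = min (1 / real n) (min (\<delta>/2) (r ^ n))"
  have D: "0 < D" "D \<le> 1 / real n" "D < \<delta>" "D \<le> r ^ n"
    using assms \<open>0 < r\<close> by (auto simp: D_def)
  then have "D powr (1 / real n) \<le> r"
    using powr_inverse_le_of_le_power[OF \<open>0 < r\<close> _ D(4) assms(1)] by simp
  then have "real n * D powr (1 / real n) \<le> b"
    using assms by (simp add: r_def field_simps)
  with D that show ?thesis
    by blast
qed

lemma holder_set_complement_dense:
  assumes n: "n \<ge> 1" and s: "s = 1 \<or> s = -1" and g: "g \<in> mspace C01" and "0 < \<epsilon>"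
  shows "\<exists>h\<in>mspace C01. mdist C01 g h < \<epsilon> \<and> h \<notin> holder_set n s"
proof -
  define a where "a = \<epsilon> / 2"
  have a: "0 < a" "a < \<epsilon>"
    using \<open>0 < \<epsilon>\<close> by (auto simp: a_def)
  have "uniformly_continuous_on {0..1} g"
    using g by (intro compact_uniformly_continuous) (auto simp: mspace_C01)
  then obtain \<delta> where "0 < \<delta>" and uc: "\<And>x y. \<lbrakk>x \<in> {0..1}; y \<in> {0..1}; dist y x < \<delta>\<rbrakk>
                                          \<Longrightarrow> dist (g y) (g x) < a/4"
    unfolding uniformly_continuous_on_def using a by (metis divide_pos_pos zero_less_numeral)
  obtain D where D: "0 < D" "D \<le> 1 / real n" "D < \<delta>"
    and D_small: "real n * D powr (1 / real n) \<le> a / 8"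
    using small_scale_mult_powr_le[OF n _ \<open>0 < \<delta>\<close>, of "a / 8"] a by auto
  define N where "N = 2 * pi / D"
  have "0 < N" "2 * pi / N = D"
    using D by (simp_all add: N_def)
  define h where "h = restrict (\<lambda>x. g x + a * sin (N * x)) {0..1}"
  have "continuous_on {0..1} (\<lambda>x. a * sin (N * x))"
    by (intro continuous_intros)
  moreover have "\<bar>a * sin (N * x)\<bar> \<le> a" for x
    using a by (simp add: abs_mult mult_left_le_one_le)
  ultimately have h: "h \<in> mspace C01" "mdist C01 g h \<le> a"
    unfolding h_def using C01_perturb[OF g] a less_imp_le by blast+
  have "h \<notin> holder_set n s"
  proof (rule oscillating_not_in_holder_set[OF less_imp_le[OF D(1)] D(2)])
    fix x assume x: "x \<in> {0..1}" "x + s * D \<in> {0..1}"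
    obtain y where side: "0 \<le> s * (y - x)" and yx: "\<bar>y - x\<bar> \<le> D"
      and osc: "1 \<le> \<bar>sin (N*y) - sin (N*x)\<bar>"
      using sin_oscillation_side[OF \<open>0 < N\<close> s] \<open>2 * pi / N = D\<close> by metis
    have "y = x + s * \<bar>y - x\<bar>"
      using s side by (auto simp: abs_if)
    then have y: "y \<in> {0..1}"
      using add_mult_in_unit_interval[OF x, of "\<bar>y - x\<bar>"] yx by auto
    have "\<bar>g y - g x\<bar> < a/4"
      using uc[OF x(1) y] yx D by (simp add: dist_real_def)
    moreover have "a \<le> \<bar>a * (sin (N*y) - sin (N*x))\<bar>"
      using osc a by (simp add: abs_mult)
    moreover have "h y - h x = (g y - g x) + a * (sin (N*y) - sin (N*x))"
      using x y by (simp add: h_def algebra_simps)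
    ultimately have "3*a/4 < \<bar>h y - h x\<bar>" by arith
    then have "real n * D powr (1 / real n) < \<bar>h y - h x\<bar>"
      using D_small a by linarith
    then show "\<exists>y\<in>{0..1}. 0 \<le> s * (y - x) \<and> \<bar>y - x\<bar> \<le> D \<and>
                 real n * D powr (1 / real n) < \<bar>h y - h x\<bar>"
      using y side yx by blast
  qed
  then show ?thesis
    using h a by force
qed

lemma holder_set_nowhere_dense:
  assumes "n \<ge> 1" "s = 1 \<or> s = -1"
  shows "nowhere_dense_in (mtopology_of C01) (holder_set n s)"
proof (rule nowhere_dense_in_mtopology_of[OF holder_set_closed])
  fix g and e :: real
  assume "g \<in> holder_set n s" "0 < e"
  then show "\<exists>h\<in>mspace C01. mdist C01 g h < e \<and> h \<notin> holder_set n s"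
    using holder_set_complement_dense[OF assms] by (simp add: holder_set_def)
qed

theorem mainTheorem3:
  shows "meagre_in (mtopology_of C01)
           {g \<in> mspace C01. \<not> completely_non_holder g}"
proof -
  define \<F> where "\<F> = (\<lambda>(n, s). holder_set n s) ` ({n. n \<ge> 1} \<times> {1, -1})"
  have "countable \<F>"
    unfolding \<F>_def by (intro countable_image countable_SIGMA) auto
  moreover have "\<forall>T\<in>\<F>. nowhere_dense_in (mtopology_of C01) T"
    unfolding \<F>_def using holder_set_nowhere_dense by auto
  moreover have "{g \<in> mspace C01. \<not> completely_non_holder g} \<subseteq> \<Union>\<F>"
    unfolding \<F>_def using not_completely_non_holder_imp_holder_set by fastforce
  ultimately show ?thesis
    unfolding meagre_in_def by auto
qed

end
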